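(* Let $x_1,\dots,x_n$ be independent random variables with support in $[0,\infty)$, finite means, and MGFs $M_{x_i}(t)=\mathbb E[e^{tx_i}]$, and let $a_1,\dots,a_n\ge 0$ be such that $\Lambda=\sum_{i=1}^n a_ix_i>0$ almost surely. Let $q:\mathsf D\to\mathbb R$ have sensitivity $\Delta q\in(0,\infty)$. Then the Randomized DP Laplace mechanism with reciprocal scale $\Lambda$ is $\epsilon$-differentially private with $$\epsilon=\ln\left[\frac{\sum_{j=1}^n a_j\,\mathbb E(x_j)}{\sum_{j=1}^n a_j\, M'_{x_j}(-a_j\Delta q)\prod_{i\ne j} M_{x_i}(-a_i\Delta q)}\right].$$
   Context: Databases form a set $\mathsf D$ with a symmetric adjacency relation $\mathrm{Adj}$. The sensitivity of $q:\mathsf D\to\mathbb R$ is $\Delta q=\sup\{|q(d)-q(d')|:\mathrm{Adj}(d,d')\}$. A randomized mechanism $M$ is $\epsilon$-differentially private if $\mathbb P(M(d)\in S)\le e^{\epsilon}\mathbb P(M(d')\in S)$ for all adjacent $d,d'$ and all Borel sets $S$. The Randomized DP Laplace mechanism with reciprocal-scale distribution $\Lambda$ (a random variable with values in $(0,\infty)$, playing the role of $1/b$ for the Laplace scale $b$) is defined by $\mathcal M_q(d)=q(d)+W$, where conditionally on $\Lambda=\lambda$ the noise $W$ is Laplace with mean $0$ and scale $1/\lambda$, i.e. has density $\frac{\lambda}{2}e^{-\lambda|w|}$; the pair $(\Lambda,W)$ is drawn independently of $d$. *)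

theory Defs
  imports "HOL-Probability.Probability"
begin

definition sensitivity :: "('d \<Rightarrow> 'd \<Rightarrow> bool) \<Rightarrow> ('d \<Rightarrow> real) \<Rightarrow> ereal" where
  "sensitivity Adj q = (SUP p \<in> {(d, d'). Adj d d'}. ereal \<bar>q (fst p) - q (snd p)\<bar>)"

definition mgf :: "'a measure \<Rightarrow> ('a \<Rightarrow> real) \<Rightarrow> real \<Rightarrow> real" where
  "mgf M X t = (\<integral>\<omega>. exp (t * X \<omega>) \<partial>M)"

definition laplace_density :: "real \<Rightarrow> real \<Rightarrow> real" where
  "laplace_density l w = l / 2 * exp (- l * \<bar>w\<bar>)"

definition differentially_private ::
  "('d \<Rightarrow> 'd \<Rightarrow> bool) \<Rightarrow> 'a measure \<Rightarrow> ('d \<Rightarrow> 'a \<Rightarrow> real) \<Rightarrow> real \<Rightarrow> bool" where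
  "differentially_private Adj M Mech eps \<longleftrightarrow>
     (\<forall>d d' S. Adj d d' \<longrightarrow> S \<in> sets borel \<longrightarrow>
        measure M {\<omega> \<in> space M. Mech d \<omega> \<in> S}
          \<le> exp eps * measure M {\<omega> \<in> space M. Mech d' \<omega> \<in> S})"

end

theory Submission
  imports Defs
begin

text \<open>
  Conditionally on \<open>\<Lambda>\<close> the noise is Laplace, so \<open>W\<close> has the mixture density
  \<open>h(w) = E[\<Lambda> exp(-\<Lambda>|w|)] / 2\<close>, and the mechanism is private with factor \<open>r\<close> as soon as
  \<open>h(w) \<le> r h(v)\<close> whenever \<open>|v| \<le> |w| + \<Delta>\<close>. Weighting the probability by \<open>\<Lambda>\<close>, the variables
  \<open>exp(-\<Lambda>|w|)\<close> and \<open>exp(-\<Lambda>\<Delta>)\<close> are both decreasing functions of \<open>\<Lambda>\<close>, hence positively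
  correlated (Chebyshev's inequality), which yields \<open>r = E[\<Lambda>] / E[\<Lambda> exp(-\<Lambda>\<Delta>)]\<close>.
  For \<open>\<Lambda> = \<Sum>\<^sub>i a\<^sub>i x\<^sub>i\<close> with independent \<open>x\<^sub>i\<close>, the expectation \<open>E[x\<^sub>j exp(-\<Lambda>\<Delta>)]\<close> factors as
  \<open>M'\<^sub>j(-a\<^sub>j\<Delta>) \<Prod>\<^sub>i\<^sub>\<noteq>\<^sub>j M\<^sub>i(-a\<^sub>i\<Delta>)\<close>; differentiating the MGF under the integral is justified
  by a second-order Taylor bound on \<open>exp(sx)\<close> that is uniform in \<open>x \<ge> 0\<close> for \<open>s\<close> near \<open>t < 0\<close>.
\<close>

section \<open>Derivative of the moment generating function on the negative axis\<close>

lemma abs_exp_minus_one_minus_le: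
  fixes y :: real
  shows "\<bar>exp y - 1 - y\<bar> \<le> exp \<bar>y\<bar> * y\<^sup>2 / 2"
proof -
  obtain t where t: "\<bar>t\<bar> \<le> \<bar>y\<bar>" "exp y = (\<Sum>m<2. y ^ m / fact m) + exp t / fact 2 * y\<^sup>2"
    using Maclaurin_exp_le[of y 2] by blast
  have eq: "exp y - 1 - y = exp t * y\<^sup>2 / 2"
    using t(2) by (simp add: numeral_2_eq_2)
  have "\<bar>exp y - 1 - y\<bar> = exp t * y\<^sup>2 / 2"
    unfolding eq by simp
  also have "\<dots> \<le> exp \<bar>y\<bar> * y\<^sup>2 / 2"
    using t(1) by (intro divide_right_mono mult_right_mono) auto
  finally show ?thesis .
qed

lemma mult_exp_neg_mult_le:
  fixes c x :: real
  assumes "c > 0" "x \<ge> 0"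
  shows "x * exp (- c * x) \<le> 1 / c"
proof -
  have "c * x \<le> exp (c * x)"
    using exp_ge_add_one_self[of "c * x"] by linarith
  then have "c * (x * exp (- c * x)) \<le> 1"
    by (simp add: exp_minus field_simps)
  then show ?thesis
    using assms by (simp add: field_simps)
qed

lemma power2_mult_exp_neg_mult_le:
  fixes c x :: real
  assumes "c > 0" "x \<ge> 0"
  shows "x\<^sup>2 * exp (- c * x) \<le> 2 / c\<^sup>2"
proof -
  have "0 \<le> c * x"
    using assms by simp
  then have "(c * x)\<^sup>2 / 2 \<le> exp (c * x)"
    using exp_lower_Taylor_quadratic[of "c * x"] by linarith
  then have "c\<^sup>2 * (x\<^sup>2 * exp (- c * x)) \<le> 2"
    by (simp add: exp_minus power_mult_distrib field_simps)
  then show ?thesis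
    using assms by (simp add: field_simps)
qed

lemma exp_mult_linear_remainder_le:
  fixes s t x :: real
  assumes t: "t < 0" and st: "\<bar>s - t\<bar> \<le> - t / 4" and x: "x \<ge> 0"
  shows "\<bar>exp (s * x) - exp (t * x) - (s - t) * (x * exp (t * x))\<bar> \<le> (s - t)\<^sup>2 / (3 * t / 4)\<^sup>2"
proof -
  define y where "y = (s - t) * x"
  have "\<bar>y\<bar> \<le> - t * x / 4"
    using mult_right_mono[OF st x] unfolding y_def by (simp add: abs_mult x)
  have "exp (s * x) - exp (t * x) - (s - t) * (x * exp (t * x)) = exp (t * x) * (exp y - 1 - y)"
    unfolding y_def by (simp add: algebra_simps flip: exp_add)
  then have "\<bar>exp (s * x) - exp (t * x) - (s - t) * (x * exp (t * x))\<bar>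
      \<le> exp (t * x) * (exp \<bar>y\<bar> * y\<^sup>2 / 2)"
    using abs_exp_minus_one_minus_le[of y] by (simp add: abs_mult mult_left_mono)
  also have "\<dots> \<le> exp (t * x) * (exp (- t * x / 4) * y\<^sup>2 / 2)"
    using \<open>\<bar>y\<bar> \<le> - t * x / 4\<close> by (intro mult_left_mono divide_right_mono mult_right_mono) auto
  also have "\<dots> = (s - t)\<^sup>2 * (x\<^sup>2 * exp (- (- 3 * t / 4) * x)) / 2"
    unfolding y_def by (simp add: power_mult_distrib mult_ac flip: exp_add)
  also have "\<dots> \<le> (s - t)\<^sup>2 * (2 / (- 3 * t / 4)\<^sup>2) / 2"
    using power2_mult_exp_neg_mult_le[of "- 3 * t / 4" x] t x
    by (intro divide_right_mono mult_left_mono) auto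
  also have "\<dots> = (s - t)\<^sup>2 / (3 * t / 4)\<^sup>2"
    by (simp add: power2_eq_square)
  finally show ?thesis .
qed

lemma has_real_derivative_if_remainder_le:
  fixes f :: "real \<Rightarrow> real"
  assumes d: "d > 0" and rem: "\<And>s. \<bar>s - t\<bar> < d \<Longrightarrow> \<bar>f s - f t - (s - t) * D\<bar> \<le> (s - t)\<^sup>2 * K"
  shows "(f has_real_derivative D) (at t)"
proof -
  have "((\<lambda>s. (f s - f t) / (s - t) - D) \<longlongrightarrow> 0) (at t)"
  proof (rule Lim_null_comparison)
    show "\<forall>\<^sub>F s in at t. norm ((f s - f t) / (s - t) - D) \<le> \<bar>s - t\<bar> * K"
      unfolding eventually_at
    proof (intro exI[of _ d] conjI ballI impI)
      fix s assume "s \<noteq> t \<and> dist s t < d"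
      then have ne: "s \<noteq> t" and near: "\<bar>s - t\<bar> < d"
        by (auto simp: dist_real_def)
      have "norm ((f s - f t) / (s - t) - D) = \<bar>f s - f t - (s - t) * D\<bar> / \<bar>s - t\<bar>"
        using ne by (simp add: field_simps)
      also have "\<dots> \<le> (s - t)\<^sup>2 * K / \<bar>s - t\<bar>"
        by (rule divide_right_mono[OF rem[OF near] abs_ge_zero])
      also have "\<dots> = \<bar>s - t\<bar> * K"
      proof -
        have "(s - t)\<^sup>2 = \<bar>s - t\<bar> * \<bar>s - t\<bar>"
          by (simp add: power2_eq_square)
        then show ?thesis
          using ne by (simp del: abs_mult_self_eq)
      qed
      finally show "norm ((f s - f t) / (s - t) - D) \<le> \<bar>s - t\<bar> * K" .
    qed (use d in simp)
    have "((\<lambda>s. \<bar>s - t\<bar> * K) \<longlongrightarrow> \<bar>t - t\<bar> * K) (at t)"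
      by (intro tendsto_intros)
    then show "((\<lambda>s. \<bar>s - t\<bar> * K) \<longlongrightarrow> 0) (at t)"
      by simp
  qed
  then have "((\<lambda>s. (f s - f t) / (s - t)) \<longlongrightarrow> D) (at t)"
    by (rule LIM_zero_cancel)
  then show ?thesis
    by (simp add: has_field_derivative_iff)
qed

context prob_space
begin

lemma integrable_exp_mult_nonpos:
  fixes X :: "'a \<Rightarrow> real"
  assumes [measurable]: "X \<in> borel_measurable M" and X: "AE \<omega> in M. X \<omega> \<ge> 0" and s: "s \<le> 0"
  shows "integrable M (\<lambda>\<omega>. exp (s * X \<omega>))"
proof (rule integrable_const_bound[where B = 1])
  show "AE \<omega> in M. norm (exp (s * X \<omega>)) \<le> 1"
    using X by eventually_elim (use s in \<open>simp add: mult_nonpos_nonneg\<close>)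
qed measurable

lemma integrable_mult_exp_mult_neg:
  fixes X :: "'a \<Rightarrow> real"
  assumes [measurable]: "X \<in> borel_measurable M" and X: "AE \<omega> in M. X \<omega> \<ge> 0" and t: "t < 0"
  shows "integrable M (\<lambda>\<omega>. X \<omega> * exp (t * X \<omega>))"
proof (rule integrable_const_bound[where B = "1 / (- t)"])
  show "AE \<omega> in M. norm (X \<omega> * exp (t * X \<omega>)) \<le> 1 / (- t)"
    using X
  proof eventually_elim
    fix \<omega> assume "X \<omega> \<ge> 0"
    then show "norm (X \<omega> * exp (t * X \<omega>)) \<le> 1 / (- t)"
      using mult_exp_neg_mult_le[of "- t" "X \<omega>"] t by (simp add: abs_mult)
  qed
qed measurable

lemma mgf_linear_remainder_le:
  fixes X :: "'a \<Rightarrow> real"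
  assumes [measurable]: "X \<in> borel_measurable M" and X: "AE \<omega> in M. X \<omega> \<ge> 0"
    and t: "t < 0" and st: "\<bar>s - t\<bar> \<le> - t / 4"
  shows "\<bar>mgf M X s - mgf M X t - (s - t) * (\<integral>\<omega>. X \<omega> * exp (t * X \<omega>) \<partial>M)\<bar>
           \<le> (s - t)\<^sup>2 / (3 * t / 4)\<^sup>2"
proof -
  define f where "f \<omega> = exp (s * X \<omega>) - exp (t * X \<omega>) - (s - t) * (X \<omega> * exp (t * X \<omega>))" for \<omega>
  have s: "s \<le> 0"
    using st t by linarith
  note integrable = integrable_exp_mult_nonpos[OF _ X s] integrable_exp_mult_nonpos[OF _ X less_imp_le[OF t]]
    integrable_mult_exp_mult_neg[OF _ X t]
  have "mgf M X s - mgf M X t - (s - t) * (\<integral>\<omega>. X \<omega> * exp (t * X \<omega>) \<partial>M) = (\<integral>\<omega>. f \<omega> \<partial>M)"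
    unfolding mgf_def f_def using integrable by simp
  also have "\<bar>\<dots>\<bar> \<le> (\<integral>\<omega>. \<bar>f \<omega>\<bar> \<partial>M)"
    by (rule integral_abs_bound)
  also have "\<dots> \<le> (\<integral>\<omega>. (s - t)\<^sup>2 / (3 * t / 4)\<^sup>2 \<partial>M)"
  proof (rule integral_mono_AE)
    show "integrable M (\<lambda>\<omega>. \<bar>f \<omega>\<bar>)"
      unfolding f_def using integrable by auto
    show "AE \<omega> in M. \<bar>f \<omega>\<bar> \<le> (s - t)\<^sup>2 / (3 * t / 4)\<^sup>2"
      using X by eventually_elim (simp add: f_def exp_mult_linear_remainder_le[OF t st])
  qed simp
  finally show ?thesis
    by (simp add: prob_space)
qed

lemma mgf_has_real_derivative:
  fixes X :: "'a \<Rightarrow> real"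
  assumes "X \<in> borel_measurable M" and "AE \<omega> in M. X \<omega> \<ge> 0" and t: "t < 0"
  shows "(mgf M X has_real_derivative (\<integral>\<omega>. X \<omega> * exp (t * X \<omega>) \<partial>M)) (at t)"
  by (rule has_real_derivative_if_remainder_le[where d = "- t / 4" and K = "1 / (3 * t / 4)\<^sup>2"])
    (use t mgf_linear_remainder_le[OF assms] in auto)

end

section \<open>A Chebyshev-type correlation inequality for exponentials\<close>

lemma integrable_mult_exp_neg_mult:
  fixes L :: "'a \<Rightarrow> real"
  assumes [measurable]: "L \<in> borel_measurable M" and L: "AE \<omega> in M. L \<omega> \<ge> 0"
    and "integrable M L" and v: "v \<ge> 0"
  shows "integrable M (\<lambda>\<omega>. L \<omega> * exp (- (L \<omega> * v)))"
proof (rule Bochner_Integration.integrable_bound[OF \<open>integrable M L\<close>])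
  show "AE \<omega> in M. norm (L \<omega> * exp (- (L \<omega> * v))) \<le> norm (L \<omega>)"
    using L
  proof eventually_elim
    fix \<omega> assume "L \<omega> \<ge> 0"
    then show "norm (L \<omega> * exp (- (L \<omega> * v))) \<le> norm (L \<omega>)"
      using v by (simp add: mult_left_le)
  qed
qed measurable

lemma mult_exp_neg_diff_nonneg:
  fixes u v l l\<^sub>0 :: real
  assumes "u \<ge> 0" and "v \<ge> 0"
  shows "0 \<le> (exp (- (l * u)) - exp (- (l\<^sub>0 * u))) * (exp (- (l * v)) - exp (- (l\<^sub>0 * v)))"
proof (cases "l \<ge> l\<^sub>0")
  case True
  then have "exp (- (l * u)) \<le> exp (- (l\<^sub>0 * u))" and "exp (- (l * v)) \<le> exp (- (l\<^sub>0 * v))"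
    using assms by (simp_all add: mult_right_mono)
  then show ?thesis
    by (intro mult_nonpos_nonpos) simp_all
next
  case False
  then have "exp (- (l\<^sub>0 * u)) \<le> exp (- (l * u))" and "exp (- (l\<^sub>0 * v)) \<le> exp (- (l * v))"
    using assms by (simp_all add: mult_right_mono)
  then show ?thesis
    by simp
qed

text \<open>
  Let \<open>c = \<integral>L exp(-L\<Delta>) / \<integral>L\<close> and \<open>exp(-l\<^sub>0\<Delta>) = c\<close>. Both factors of
  \<open>L (exp(-Lu) - exp(-l\<^sub>0u)) (exp(-L\<Delta>) - c)\<close> change sign at \<open>L = l\<^sub>0\<close>, so this integrand is
  nonnegative; its integral is \<open>\<integral>L exp(-L(u+\<Delta>)) - c \<integral>L exp(-Lu)\<close>.
\<close>
lemma integral_mult_exp_neg_correlation_le: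
  fixes L :: "'a \<Rightarrow> real"
  assumes [measurable]: "L \<in> borel_measurable M" and L: "AE \<omega> in M. L \<omega> \<ge> 0"
    and "integrable M L" and \<Delta>: "\<Delta> > 0" and u: "u \<ge> 0"
    and m_pos: "(\<integral>\<omega>. L \<omega> \<partial>M) > 0"
    and g_pos: "(\<integral>\<omega>. L \<omega> * exp (- (L \<omega> * \<Delta>)) \<partial>M) > 0"
  shows "(\<integral>\<omega>. L \<omega> * exp (- (L \<omega> * u)) \<partial>M) * (\<integral>\<omega>. L \<omega> * exp (- (L \<omega> * \<Delta>)) \<partial>M)
           \<le> (\<integral>\<omega>. L \<omega> \<partial>M) * (\<integral>\<omega>. L \<omega> * exp (- (L \<omega> * (u + \<Delta>))) \<partial>M)"
proof -
  define m where "m = (\<integral>\<omega>. L \<omega> \<partial>M)"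
  define g where "g = (\<integral>\<omega>. L \<omega> * exp (- (L \<omega> * \<Delta>)) \<partial>M)"
  define c where "c = g / m"
  define l\<^sub>0 where "l\<^sub>0 = - ln c / \<Delta>"
  define e\<^sub>0 where "e\<^sub>0 = exp (- (l\<^sub>0 * u))"
  have c: "exp (- (l\<^sub>0 * \<Delta>)) = c"
    using \<Delta> m_pos g_pos by (simp add: l\<^sub>0_def c_def m_def g_def)
  have integrable: "integrable M (\<lambda>\<omega>. L \<omega> * exp (- (L \<omega> * v)))" if "v \<ge> 0" for v
    by (rule integrable_mult_exp_neg_mult) (use assms that in auto)
  have "(\<integral>\<omega>. L \<omega> * (exp (- (L \<omega> * u)) - e\<^sub>0) * (exp (- (L \<omega> * \<Delta>)) - c) \<partial>M)
      = (\<integral>\<omega>. L \<omega> * exp (- (L \<omega> * (u + \<Delta>))) - c * (L \<omega> * exp (- (L \<omega> * u)))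
             - e\<^sub>0 * (L \<omega> * exp (- (L \<omega> * \<Delta>))) + e\<^sub>0 * c * L \<omega> \<partial>M)"
    by (intro Bochner_Integration.integral_cong) (simp_all add: algebra_simps flip: exp_add)
  also have "\<dots> = (\<integral>\<omega>. L \<omega> * exp (- (L \<omega> * (u + \<Delta>))) \<partial>M) - c * (\<integral>\<omega>. L \<omega> * exp (- (L \<omega> * u)) \<partial>M)
      - e\<^sub>0 * g + e\<^sub>0 * c * m"
    unfolding g_def m_def using integrable u \<Delta> \<open>integrable M L\<close> by simp
  also have "e\<^sub>0 * c * m = e\<^sub>0 * g"
    using m_pos by (simp add: c_def m_def)
  finally have "(\<integral>\<omega>. L \<omega> * (exp (- (L \<omega> * u)) - e\<^sub>0) * (exp (- (L \<omega> * \<Delta>)) - c) \<partial>M)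
      = (\<integral>\<omega>. L \<omega> * exp (- (L \<omega> * (u + \<Delta>))) \<partial>M) - c * (\<integral>\<omega>. L \<omega> * exp (- (L \<omega> * u)) \<partial>M)"
    by simp
  moreover have "(\<integral>\<omega>. L \<omega> * (exp (- (L \<omega> * u)) - e\<^sub>0) * (exp (- (L \<omega> * \<Delta>)) - c) \<partial>M) \<ge> 0"
  proof (rule integral_nonneg_AE)
    show "AE \<omega> in M. 0 \<le> L \<omega> * (exp (- (L \<omega> * u)) - e\<^sub>0) * (exp (- (L \<omega> * \<Delta>)) - c)"
      using L
    proof eventually_elim
      fix \<omega> assume "L \<omega> \<ge> 0"
      then show "0 \<le> L \<omega> * (exp (- (L \<omega> * u)) - e\<^sub>0) * (exp (- (L \<omega> * \<Delta>)) - c)"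
        using mult_exp_neg_diff_nonneg[of u \<Delta> "L \<omega>" l\<^sub>0] u \<Delta> unfolding e\<^sub>0_def c[symmetric]
        by (metis less_imp_le mult.assoc mult_nonneg_nonneg)
    qed
  qed
  ultimately have "c * (\<integral>\<omega>. L \<omega> * exp (- (L \<omega> * u)) \<partial>M) \<le> (\<integral>\<omega>. L \<omega> * exp (- (L \<omega> * (u + \<Delta>))) \<partial>M)"
    by simp
  then show ?thesis
    using m_pos by (simp add: c_def m_def g_def field_simps)
qed

section \<open>The Laplace mixture\<close>

lemma laplace_density_nonneg: "l \<ge> 0 \<Longrightarrow> laplace_density l w \<ge> 0"
  unfolding laplace_density_def by simp

lemma borel_measurable_laplace_density [measurable]:
  assumes [measurable]: "f \<in> borel_measurable N" "g \<in> borel_measurable N"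
  shows "(\<lambda>x. laplace_density (f x) (g x)) \<in> borel_measurable N"
  unfolding laplace_density_def by measurable

text \<open>The Laplace density is the average of the exponential densities at \<open>w\<close> and \<open>-w\<close>,
  except at \<open>w = 0\<close>, where it is smaller; this gives the bound without computing the integral.\<close>
lemma nn_integral_laplace_density_le_1:
  assumes l: "l > 0"
  shows "(\<integral>\<^sup>+w. ennreal (laplace_density l w) \<partial>lborel) \<le> 1"
proof -
  define e where "e = exponential_density l"
  have [measurable]: "e \<in> borel_measurable borel"
    unfolding e_def exponential_density_def by measurable
  have e_nonneg: "e x \<ge> 0" for x
    unfolding e_def using exponential_density_nonneg[OF l] by auto
  have "(\<integral>\<^sup>+x. ennreal (e x) \<partial>lborel) = 1"
  proof -
    interpret prob_space "density lborel (exponential_density l)"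
      by (rule prob_space_exponential_density[OF l])
    show ?thesis
      using emeasure_space_1 by (simp add: e_def emeasure_density)
  qed
  moreover have "(\<integral>\<^sup>+x. ennreal (e x / 2) \<partial>lborel) = (\<integral>\<^sup>+x. ennreal (1 / 2) * ennreal (e x) \<partial>lborel)"
    by (intro nn_integral_cong) (simp add: e_nonneg divide_ennreal_def mult.commute flip: ennreal_divide_numeral)
  ultimately have half: "(\<integral>\<^sup>+x. ennreal (e x / 2) \<partial>lborel) = ennreal (1 / 2)"
    by (simp add: nn_integral_cmult)
  have "(\<integral>\<^sup>+x. ennreal (e x / 2) \<partial>lborel) = (\<integral>\<^sup>+x. ennreal (e (- x) / 2) \<partial>lborel)"
    using nn_integral_real_affine[of "\<lambda>x. ennreal (e x / 2)" "- 1" 0] by simp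
  then have half': "(\<integral>\<^sup>+x. ennreal (e (- x) / 2) \<partial>lborel) = ennreal (1 / 2)"
    using half by simp
  have "laplace_density l w \<le> e w / 2 + e (- w) / 2" for w
    unfolding laplace_density_def e_def exponential_density_def using l
    by (cases "w < 0") (auto simp: abs_if mult.commute)
  then have "(\<integral>\<^sup>+w. ennreal (laplace_density l w) \<partial>lborel)
      \<le> (\<integral>\<^sup>+w. ennreal (e w / 2) + ennreal (e (- w) / 2) \<partial>lborel)"
    using e_nonneg by (intro nn_integral_mono) (simp add: ennreal_plus[symmetric] ennreal_leI del: ennreal_plus)
  also have "\<dots> = ennreal (1 / 2) + ennreal (1 / 2)"
    by (subst nn_integral_add) (simp_all add: half half')
  also have "\<dots> = 1"
    by (subst ennreal_plus[symmetric]) simp_all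
  finally show ?thesis .
qed

lemma nn_integral_indicator_laplace_density_le_1:
  assumes "l > 0"
  shows "(\<integral>\<^sup>+w. ennreal (indicator B w * laplace_density l w) \<partial>lborel) \<le> 1"
proof -
  have "(\<integral>\<^sup>+w. ennreal (indicator B w * laplace_density l w) \<partial>lborel)
      \<le> (\<integral>\<^sup>+w. ennreal (laplace_density l w) \<partial>lborel)"
    by (intro nn_integral_mono) (simp add: indicator_def)
  also have "\<dots> \<le> 1"
    by (rule nn_integral_laplace_density_le_1[OF assms])
  finally show ?thesis .
qed

lemma set_integral_laplace_density_eq_nn_integral:
  assumes "l > 0" and [measurable]: "B \<in> sets borel"
  shows "(LINT w:B|lborel. laplace_density l w)
           = enn2real (\<integral>\<^sup>+w. ennreal (indicator B w * laplace_density l w) \<partial>lborel)"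
  unfolding set_lebesgue_integral_def real_scaleR_def
  by (intro integral_eq_nn_integral) (use assms(1) in \<open>simp_all add: laplace_density_nonneg\<close>)

lemma (in prob_space) integral_pos_if_AE_pos:
  fixes f :: "'a \<Rightarrow> real"
  assumes "integrable M f" and pos: "AE \<omega> in M. f \<omega> > 0"
  shows "(\<integral>\<omega>. f \<omega> \<partial>M) > 0"
proof -
  have nonneg: "AE \<omega> in M. 0 \<le> f \<omega>"
    using pos by eventually_elim simp
  have "\<not> (AE \<omega> in M. f \<omega> = 0)"
  proof
    assume "AE \<omega> in M. f \<omega> = 0"
    with pos have "AE \<omega> in M. False"
      by eventually_elim simp
    then show False
      by (simp add: AE_False)
  qed
  then show ?thesis
    using integral_nonneg_AE[OF nonneg] integral_nonneg_eq_0_iff_AE[OF assms(1) nonneg] by linarith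
qed

lemma (in prob_space) integral_mult_exp_neg_mult_pos:
  fixes L :: "'a \<Rightarrow> real"
  assumes [measurable]: "L \<in> borel_measurable M" and L: "AE \<omega> in M. L \<omega> > 0"
    and "integrable M L" and "v \<ge> 0"
  shows "(\<integral>\<omega>. L \<omega> * exp (- (L \<omega> * v)) \<partial>M) > 0"
proof (rule integral_pos_if_AE_pos)
  show "integrable M (\<lambda>\<omega>. L \<omega> * exp (- (L \<omega> * v)))"
    by (rule integrable_mult_exp_neg_mult) (use assms in \<open>auto elim!: eventually_mono\<close>)
  show "AE \<omega> in M. L \<omega> * exp (- (L \<omega> * v)) > 0"
    using L by eventually_elim simp
qed

definition laplace_mixture :: "'a measure \<Rightarrow> ('a \<Rightarrow> real) \<Rightarrow> real \<Rightarrow> real" where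
  "laplace_mixture M L w = (\<integral>\<omega>. laplace_density (L \<omega>) w \<partial>M)"

context prob_space
begin

lemma laplace_mixture_le:
  fixes L :: "'a \<Rightarrow> real"
  assumes [measurable]: "L \<in> borel_measurable M" and L: "AE \<omega> in M. L \<omega> > 0"
    and "integrable M L" and \<Delta>: "\<Delta> > 0" and v: "\<bar>v\<bar> \<le> \<bar>w\<bar> + \<Delta>"
  shows "laplace_mixture M L w
           \<le> (\<integral>\<omega>. L \<omega> \<partial>M) / (\<integral>\<omega>. L \<omega> * exp (- (L \<omega> * \<Delta>)) \<partial>M) * laplace_mixture M L v"
proof -
  have L_nonneg: "AE \<omega> in M. L \<omega> \<ge> 0"
    using L by eventually_elim simp
  define I where "I x = (\<integral>\<omega>. L \<omega> * exp (- (L \<omega> * x)) \<partial>M)" for x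
  have integrable: "integrable M (\<lambda>\<omega>. L \<omega> * exp (- (L \<omega> * x)))" if "x \<ge> 0" for x
    by (rule integrable_mult_exp_neg_mult) (use assms L_nonneg that in auto)
  have m_pos: "(\<integral>\<omega>. L \<omega> \<partial>M) > 0"
    by (rule integral_pos_if_AE_pos) (use assms in auto)
  have g_pos: "I \<Delta> > 0"
    unfolding I_def by (rule integral_mult_exp_neg_mult_pos) (use assms in auto)
  have "I \<bar>w\<bar> * I \<Delta> \<le> (\<integral>\<omega>. L \<omega> \<partial>M) * I (\<bar>w\<bar> + \<Delta>)"
    unfolding I_def
    by (rule integral_mult_exp_neg_correlation_le) (use assms L_nonneg m_pos g_pos in \<open>auto simp: I_def\<close>)
  also have "I (\<bar>w\<bar> + \<Delta>) \<le> I \<bar>v\<bar>"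
    unfolding I_def
  proof (rule integral_mono_AE)
    show "AE \<omega> in M. L \<omega> * exp (- (L \<omega> * (\<bar>w\<bar> + \<Delta>))) \<le> L \<omega> * exp (- (L \<omega> * \<bar>v\<bar>))"
      using L_nonneg by eventually_elim (use v in \<open>auto intro!: mult_left_mono\<close>)
  qed (use integrable \<Delta> in auto)
  finally have "I \<bar>w\<bar> \<le> (\<integral>\<omega>. L \<omega> \<partial>M) / I \<Delta> * I \<bar>v\<bar>"
    using m_pos g_pos by (simp add: field_simps)
  moreover have mixture: "laplace_mixture M L x = I \<bar>x\<bar> / 2" for x
    unfolding laplace_mixture_def laplace_density_def I_def by (simp add: mult.commute)
  ultimately show ?thesis
    using divide_right_mono[of _ _ 2] by (simp only: mixture I_def times_divide_eq_right) simp
qed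

lemma nn_integral_laplace_density_eq_laplace_mixture:
  fixes L :: "'a \<Rightarrow> real"
  assumes [measurable]: "L \<in> borel_measurable M" and L: "AE \<omega> in M. L \<omega> > 0" and "integrable M L"
  shows "(\<integral>\<^sup>+\<omega>. ennreal (laplace_density (L \<omega>) w) \<partial>M) = ennreal (laplace_mixture M L w)"
  unfolding laplace_mixture_def
proof (rule nn_integral_eq_integral)
  have "integrable M (\<lambda>\<omega>. L \<omega> * exp (- (L \<omega> * \<bar>w\<bar>)))"
    by (rule integrable_mult_exp_neg_mult) (use L \<open>integrable M L\<close> in \<open>auto elim!: eventually_mono\<close>)
  then show "integrable M (\<lambda>\<omega>. laplace_density (L \<omega>) w)"
    unfolding laplace_density_def by (simp add: integrable_divide mult.commute)
  show "AE \<omega> in M. 0 \<le> laplace_density (L \<omega>) w"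
    using L by eventually_elim (simp add: laplace_density_nonneg)
qed

lemma emeasure_eq_nn_integral_laplace_mixture:
  fixes L W :: "'a \<Rightarrow> real"
  assumes [measurable]: "L \<in> borel_measurable M" and L: "AE \<omega> in M. L \<omega> > 0"
    and "integrable M L" and [measurable]: "W \<in> borel_measurable M" and [measurable]: "B \<in> sets borel"
    and law: "measure M {\<omega> \<in> space M. W \<omega> \<in> B} = (\<integral>\<omega>. (LINT w:B|lborel. laplace_density (L \<omega>) w) \<partial>M)"
  shows "emeasure M {\<omega> \<in> space M. W \<omega> \<in> B}
           = (\<integral>\<^sup>+w. indicator B w * ennreal (laplace_mixture M L w) \<partial>lborel)"
proof -
  interpret pair_sigma_finite M lborel ..
  define G where "G \<omega> = (\<integral>\<^sup>+w. ennreal (indicator B w * laplace_density (L \<omega>) w) \<partial>lborel)" for \<omega>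
  have [measurable]: "G \<in> borel_measurable M"
    unfolding G_def by measurable
  have G_le: "AE \<omega> in M. G \<omega> \<le> 1"
    using L by eventually_elim (simp add: G_def nn_integral_indicator_laplace_density_le_1)
  have "(\<integral>\<omega>. (LINT w:B|lborel. laplace_density (L \<omega>) w) \<partial>M) = (\<integral>\<omega>. enn2real (G \<omega>) \<partial>M)"
  proof (rule integral_cong_AE)
    show "(\<lambda>\<omega>. LINT w:B|lborel. laplace_density (L \<omega>) w) \<in> borel_measurable M"
      unfolding set_lebesgue_integral_def by measurable
    show "AE \<omega> in M. (LINT w:B|lborel. laplace_density (L \<omega>) w) = enn2real (G \<omega>)"
      using L by eventually_elim (simp add: G_def set_integral_laplace_density_eq_nn_integral)
  qed measurable
  then have "emeasure M {\<omega> \<in> space M. W \<omega> \<in> B} = ennreal (\<integral>\<omega>. enn2real (G \<omega>) \<partial>M)"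
    by (simp add: emeasure_eq_measure law)
  also have "\<dots> = (\<integral>\<^sup>+\<omega>. ennreal (enn2real (G \<omega>)) \<partial>M)"
  proof (rule nn_integral_eq_integral[symmetric])
    show "integrable M (\<lambda>\<omega>. enn2real (G \<omega>))"
    proof (rule integrable_const_bound[where B = 1])
      show "AE \<omega> in M. norm (enn2real (G \<omega>)) \<le> 1"
        using G_le by eventually_elim (simp add: enn2real_leI)
    qed measurable
  qed simp
  also have "\<dots> = (\<integral>\<^sup>+\<omega>. G \<omega> \<partial>M)"
    using G_le by (intro nn_integral_cong_AE) (auto elim!: eventually_mono
        intro!: ennreal_enn2real le_less_trans[OF _ ennreal_one_less_top])
  also have "\<dots> = (\<integral>\<^sup>+w. (\<integral>\<^sup>+\<omega>. ennreal (indicator B w * laplace_density (L \<omega>) w) \<partial>M) \<partial>lborel)"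
    unfolding G_def by (rule Fubini'[symmetric]) measurable
  also have "\<dots> = (\<integral>\<^sup>+w. indicator B w * ennreal (laplace_mixture M L w) \<partial>lborel)"
    using nn_integral_laplace_density_eq_laplace_mixture[OF assms(1-3)]
    by (intro nn_integral_cong) (simp add: indicator_def)
  finally show ?thesis .
qed

end

lemma emeasure_translate_le_if_density_le:
  fixes W :: "'a \<Rightarrow> real" and h :: "real \<Rightarrow> ennreal"
  assumes [measurable]: "W \<in> borel_measurable M" "h \<in> borel_measurable borel" "S \<in> sets borel"
    and density: "\<And>B. B \<in> sets borel \<Longrightarrow>
       emeasure M {\<omega> \<in> space M. W \<omega> \<in> B} = (\<integral>\<^sup>+w. indicator B w * h w \<partial>lborel)"
    and ratio: "\<And>w. h w \<le> r * h (w + (c - c'))"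
  shows "emeasure M {\<omega> \<in> space M. c + W \<omega> \<in> S} \<le> r * emeasure M {\<omega> \<in> space M. c' + W \<omega> \<in> S}"
proof -
  define B where "B x = {w. x + w \<in> S}" for x :: real
  have [measurable]: "B x \<in> sets borel" for x
    using measurable_sets[of "\<lambda>w. x + w" borel borel S] unfolding B_def by (simp add: vimage_def)
  have shift: "indicator (B c) w = (indicator (B c') (w + (c - c')) :: ennreal)" for w
    unfolding B_def by (simp add: indicator_def algebra_simps)
  have "emeasure M {\<omega> \<in> space M. c + W \<omega> \<in> S} = (\<integral>\<^sup>+w. indicator (B c) w * h w \<partial>lborel)"
    using density[of "B c"] by (simp add: B_def)
  also have "\<dots> \<le> (\<integral>\<^sup>+w. r * (indicator (B c') (w + (c - c')) * h (w + (c - c'))) \<partial>lborel)"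
  proof (rule nn_integral_mono)
    fix w
    have "indicator (B c) w * h w \<le> indicator (B c) w * (r * h (w + (c - c')))"
      by (rule mult_left_mono[OF ratio]) simp
    then show "indicator (B c) w * h w \<le> r * (indicator (B c') (w + (c - c')) * h (w + (c - c')))"
      by (simp add: shift mult_ac)
  qed
  also have "\<dots> = r * (\<integral>\<^sup>+w. indicator (B c') (w + (c - c')) * h (w + (c - c')) \<partial>lborel)"
    by (rule nn_integral_cmult) measurable
  also have "(\<integral>\<^sup>+w. indicator (B c') (w + (c - c')) * h (w + (c - c')) \<partial>lborel)
      = (\<integral>\<^sup>+w. indicator (B c') w * h w \<partial>lborel)"
    using nn_integral_real_affine[of "\<lambda>w. indicator (B c') w * h w" 1 "c - c'"] by (simp add: add.commute)
  also have "\<dots> = emeasure M {\<omega> \<in> space M. c' + W \<omega> \<in> S}"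
    using density[of "B c'"] by (simp add: B_def)
  finally show ?thesis .
qed

lemma (in prob_space) measure_laplace_mixture_translate_le:
  fixes L W :: "'a \<Rightarrow> real"
  assumes [measurable]: "L \<in> borel_measurable M" and L: "AE \<omega> in M. L \<omega> > 0"
    and "integrable M L" and [measurable]: "W \<in> borel_measurable M" and \<Delta>: "\<Delta> > 0"
    and shift: "\<bar>c - c'\<bar> \<le> \<Delta>" and [measurable]: "S \<in> sets borel"
    and law: "\<And>B. B \<in> sets borel \<Longrightarrow>
       measure M {\<omega> \<in> space M. W \<omega> \<in> B} = (\<integral>\<omega>. (LINT w:B|lborel. laplace_density (L \<omega>) w) \<partial>M)"
  shows "measure M {\<omega> \<in> space M. c + W \<omega> \<in> S}
           \<le> (\<integral>\<omega>. L \<omega> \<partial>M) / (\<integral>\<omega>. L \<omega> * exp (- (L \<omega> * \<Delta>)) \<partial>M)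
              * measure M {\<omega> \<in> space M. c' + W \<omega> \<in> S}"
proof -
  define r where "r = (\<integral>\<omega>. L \<omega> \<partial>M) / (\<integral>\<omega>. L \<omega> * exp (- (L \<omega> * \<Delta>)) \<partial>M)"
  have r: "r \<ge> 0"
    unfolding r_def using L \<Delta>
    by (intro divide_nonneg_nonneg integral_nonneg_AE) (auto elim!: eventually_mono)
  have "emeasure M {\<omega> \<in> space M. c + W \<omega> \<in> S} \<le> ennreal r * emeasure M {\<omega> \<in> space M. c' + W \<omega> \<in> S}"
  proof (rule emeasure_translate_le_if_density_le)
    show "(\<lambda>w. ennreal (laplace_mixture M L w)) \<in> borel_measurable borel"
      unfolding laplace_mixture_def by measurable
    show "emeasure M {\<omega> \<in> space M. W \<omega> \<in> B}
        = (\<integral>\<^sup>+w. indicator B w * ennreal (laplace_mixture M L w) \<partial>lborel)" if "B \<in> sets borel" for B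
      by (rule emeasure_eq_nn_integral_laplace_mixture) (use assms(1-4) that law[OF that] in simp_all)
    show "ennreal (laplace_mixture M L w) \<le> ennreal r * ennreal (laplace_mixture M L (w + (c - c')))" for w
    proof -
      have "laplace_mixture M L w \<le> r * laplace_mixture M L (w + (c - c'))"
        unfolding r_def
        by (rule laplace_mixture_le) (use assms(1-3) \<Delta> abs_triangle_ineq[of w "c - c'"] shift in auto)
      then have "ennreal (laplace_mixture M L w) \<le> ennreal (r * laplace_mixture M L (w + (c - c')))"
        by (rule ennreal_leI)
      then show ?thesis
        by (simp only: ennreal_mult'[OF r])
    qed
  qed measurable
  then have "ennreal (measure M {\<omega> \<in> space M. c + W \<omega> \<in> S})
      \<le> ennreal (r * measure M {\<omega> \<in> space M. c' + W \<omega> \<in> S})"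
    by (simp add: emeasure_eq_measure ennreal_mult'[OF r])
  then show ?thesis
    unfolding r_def[symmetric] using r by (simp add: ennreal_le_iff)
qed

lemma abs_diff_le_if_sensitivity_eq:
  assumes "sensitivity Adj q = ereal \<Delta>" and "Adj d d'"
  shows "\<bar>q d - q d'\<bar> \<le> \<Delta>"
proof -
  have "ereal \<bar>q (fst (d, d')) - q (snd (d, d'))\<bar> \<le> sensitivity Adj q"
    unfolding sensitivity_def by (rule SUP_upper) (use assms(2) in simp)
  then show ?thesis
    using assms(1) by simp
qed

lemma (in prob_space) differentially_private_laplace_mixture:
  fixes L W :: "'a \<Rightarrow> real" and q :: "'d \<Rightarrow> real"
  assumes [measurable]: "L \<in> borel_measurable M" and L: "AE \<omega> in M. L \<omega> > 0"
    and "integrable M L" and [measurable]: "W \<in> borel_measurable M"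
    and sensitivity: "sensitivity Adj q = ereal \<Delta>" and \<Delta>: "\<Delta> > 0"
    and law: "\<And>B. B \<in> sets borel \<Longrightarrow>
       measure M {\<omega> \<in> space M. W \<omega> \<in> B} = (\<integral>\<omega>. (LINT w:B|lborel. laplace_density (L \<omega>) w) \<partial>M)"
  shows "differentially_private Adj M (\<lambda>d \<omega>. q d + W \<omega>)
           (ln ((\<integral>\<omega>. L \<omega> \<partial>M) / (\<integral>\<omega>. L \<omega> * exp (- (L \<omega> * \<Delta>)) \<partial>M)))"
proof -
  have ratio_pos: "(\<integral>\<omega>. L \<omega> \<partial>M) / (\<integral>\<omega>. L \<omega> * exp (- (L \<omega> * \<Delta>)) \<partial>M) > 0"
    using integral_pos_if_AE_pos[OF \<open>integrable M L\<close> L] integral_mult_exp_neg_mult_pos[OF assms(1-3), of \<Delta>] \<Delta>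
    by simp
  then show ?thesis
    unfolding differentially_private_def exp_ln[OF ratio_pos]
  proof (intro allI impI)
    fix d d' and S :: "real set"
    assume "Adj d d'" and "S \<in> sets borel"
    then show "measure M {\<omega> \<in> space M. q d + W \<omega> \<in> S}
        \<le> (\<integral>\<omega>. L \<omega> \<partial>M) / (\<integral>\<omega>. L \<omega> * exp (- (L \<omega> * \<Delta>)) \<partial>M)
           * measure M {\<omega> \<in> space M. q d' + W \<omega> \<in> S}"
      by (intro measure_laplace_mixture_translate_le abs_diff_le_if_sensitivity_eq[OF sensitivity] assms(1-4) \<Delta> law)
  qed
qed

section \<open>The denominator as an expectation\<close>

lemma (in prob_space) deriv_mgf_times_prod_mgf:
  fixes X :: "nat \<Rightarrow> 'a \<Rightarrow> real" and a :: "nat \<Rightarrow> real"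
  assumes X_meas [measurable]: "\<And>i. i < n \<Longrightarrow> X i \<in> borel_measurable M"
    and indep: "indep_vars (\<lambda>_. borel) X {..<n}"
    and X: "\<And>i. i < n \<Longrightarrow> AE \<omega> in M. X i \<omega> \<ge> 0"
    and a: "\<And>i. i < n \<Longrightarrow> a i \<ge> 0" and \<Delta>: "\<Delta> > 0" and j: "j < n" and aj: "a j > 0"
  shows "deriv (mgf M (X j)) (- a j * \<Delta>) * (\<Prod>i\<in>{..<n} - {j}. mgf M (X i) (- a i * \<Delta>))
           = (\<integral>\<omega>. X j \<omega> * exp (- ((\<Sum>i<n. a i * X i \<omega>) * \<Delta>)) \<partial>M)"
proof -
  define h where "h i x = (if i = j then x else 1) * exp (- a i * \<Delta> * x)" for i x
  have jn: "j \<in> {..<n}"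
    using j by simp
  have integrable: "integrable M (\<lambda>\<omega>. h i (X i \<omega>))" if "i \<in> {..<n}" for i
  proof -
    have i: "i < n" and s: "- a i * \<Delta> \<le> 0"
      using that a[of i] \<Delta> by auto
    then show ?thesis
      using integrable_exp_mult_nonpos[OF X_meas[OF i] X[OF i] s]
        integrable_mult_exp_mult_neg[OF X_meas[OF i] X[OF i], of "- a j * \<Delta>"] aj \<Delta>
      by (cases "i = j") (auto simp: h_def)
  qed
  have "(mgf M (X j) has_real_derivative (\<integral>\<omega>. h j (X j \<omega>) \<partial>M)) (at (- a j * \<Delta>))"
    using mgf_has_real_derivative[OF X_meas[OF j] X[OF j], of "- a j * \<Delta>"] aj \<Delta> by (simp add: h_def)
  then have "deriv (mgf M (X j)) (- a j * \<Delta>) = (\<integral>\<omega>. h j (X j \<omega>) \<partial>M)"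
    by (rule DERIV_imp_deriv)
  moreover have "mgf M (X i) (- a i * \<Delta>) = (\<integral>\<omega>. h i (X i \<omega>) \<partial>M)" if "i \<noteq> j" for i
    using that by (simp add: h_def mgf_def)
  ultimately have "deriv (mgf M (X j)) (- a j * \<Delta>) * (\<Prod>i\<in>{..<n} - {j}. mgf M (X i) (- a i * \<Delta>))
      = (\<Prod>i\<in>{..<n}. \<integral>\<omega>. h i (X i \<omega>) \<partial>M)"
    by (simp add: prod.remove[OF _ jn])
  also have "\<dots> = (\<integral>\<omega>. (\<Prod>i\<in>{..<n}. h i (X i \<omega>)) \<partial>M)"
  proof (rule indep_vars_lebesgue_integral[symmetric])
    show "indep_vars (\<lambda>_. borel) (\<lambda>i \<omega>. h i (X i \<omega>)) {..<n}"
      by (rule indep_vars_compose2[OF indep]) (unfold h_def, measurable)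
  qed (use integrable in auto)
  also have "\<dots> = (\<integral>\<omega>. X j \<omega> * exp (- ((\<Sum>i<n. a i * X i \<omega>) * \<Delta>)) \<partial>M)"
  proof (rule Bochner_Integration.integral_cong)
    fix \<omega>
    have "(\<Prod>i\<in>{..<n}. h i (X i \<omega>)) = X j \<omega> * (\<Prod>i\<in>{..<n}. exp (- a i * \<Delta> * X i \<omega>))"
      by (simp add: h_def prod.distrib prod.remove[OF _ jn] if_distrib prod.delta' cong: if_cong)
    also have "\<dots> = X j \<omega> * exp (- ((\<Sum>i<n. a i * X i \<omega>) * \<Delta>))"
      by (simp add: exp_sum[symmetric] sum_distrib_left sum_negf mult_ac)
    finally show "(\<Prod>i\<in>{..<n}. h i (X i \<omega>)) = X j \<omega> * exp (- ((\<Sum>i<n. a i * X i \<omega>) * \<Delta>))" .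
  qed simp
  finally show ?thesis .
qed

lemma (in prob_space) sum_mult_deriv_mgf_prod_mgf:
  fixes X :: "nat \<Rightarrow> 'a \<Rightarrow> real" and a :: "nat \<Rightarrow> real"
  assumes X_meas [measurable]: "\<And>i. i < n \<Longrightarrow> X i \<in> borel_measurable M"
    and indep: "indep_vars (\<lambda>_. borel) X {..<n}"
    and X: "\<And>i. i < n \<Longrightarrow> AE \<omega> in M. X i \<omega> \<ge> 0"
    and X_int: "\<And>i. i < n \<Longrightarrow> integrable M (X i)"
    and a: "\<And>i. i < n \<Longrightarrow> a i \<ge> 0" and \<Delta>: "\<Delta> > 0"
  shows "(\<Sum>j<n. a j * deriv (mgf M (X j)) (- a j * \<Delta>) * (\<Prod>i\<in>{..<n} - {j}. mgf M (X i) (- a i * \<Delta>)))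
           = (\<integral>\<omega>. (\<Sum>i<n. a i * X i \<omega>) * exp (- ((\<Sum>i<n. a i * X i \<omega>) * \<Delta>)) \<partial>M)"
proof -
  define E where "E \<omega> = exp (- ((\<Sum>i<n. a i * X i \<omega>) * \<Delta>))" for \<omega>
  have E_meas [measurable]: "E \<in> borel_measurable M"
    unfolding E_def using X_meas by (auto intro!: borel_measurable_sum borel_measurable_exp)
  have "AE \<omega> in M. \<forall>i\<in>{..<n}. X i \<omega> \<ge> 0"
    using X by (subst AE_finite_all) auto
  then have E_le: "AE \<omega> in M. E \<omega> \<le> 1"
    by eventually_elim (use a \<Delta> in \<open>auto simp: E_def intro!: mult_nonneg_nonneg sum_nonneg\<close>)
  have integrable: "integrable M (\<lambda>\<omega>. a j * (X j \<omega> * E \<omega>))" if "j \<in> {..<n}" for j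
  proof -
    have j: "j < n"
      using that by simp
    have "integrable M (\<lambda>\<omega>. X j \<omega> * E \<omega>)"
    proof (rule Bochner_Integration.integrable_bound[OF X_int[OF j]])
      show "AE \<omega> in M. norm (X j \<omega> * E \<omega>) \<le> norm (X j \<omega>)"
        using X[OF j] E_le by eventually_elim (simp add: E_def abs_mult mult_left_le)
    qed (intro borel_measurable_times X_meas[OF j] E_meas)
    then show ?thesis
      by simp
  qed
  have summand: "a j * deriv (mgf M (X j)) (- a j * \<Delta>) * (\<Prod>i\<in>{..<n} - {j}. mgf M (X i) (- a i * \<Delta>))
      = (\<integral>\<omega>. a j * (X j \<omega> * E \<omega>) \<partial>M)" if "j \<in> {..<n}" for j
  proof (cases "a j = 0")
    case False
    with that a[of j] have "j < n" and "a j > 0"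
      by simp_all
    then have "deriv (mgf M (X j)) (- a j * \<Delta>) * (\<Prod>i\<in>{..<n} - {j}. mgf M (X i) (- a i * \<Delta>))
        = (\<integral>\<omega>. X j \<omega> * E \<omega> \<partial>M)"
      unfolding E_def by (intro deriv_mgf_times_prod_mgf) (simp_all add: X_meas indep X a \<Delta>)
    then show ?thesis
      by (simp add: mult.assoc)
  qed simp
  have "(\<Sum>j<n. a j * deriv (mgf M (X j)) (- a j * \<Delta>) * (\<Prod>i\<in>{..<n} - {j}. mgf M (X i) (- a i * \<Delta>)))
      = (\<Sum>j<n. \<integral>\<omega>. a j * (X j \<omega> * E \<omega>) \<partial>M)"
    by (rule sum.cong[OF refl]) (rule summand)
  also have "\<dots> = (\<integral>\<omega>. (\<Sum>j<n. a j * (X j \<omega> * E \<omega>)) \<partial>M)"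
    by (rule Bochner_Integration.integral_sum[symmetric]) (rule integrable)
  also have "\<dots> = (\<integral>\<omega>. (\<Sum>i<n. a i * X i \<omega>) * E \<omega> \<partial>M)"
    by (simp add: sum_distrib_right mult.assoc)
  finally show ?thesis
    unfolding E_def .
qed

theorem mainTheorem3:
  fixes M :: "'a measure" and n :: nat
    and X :: "nat \<Rightarrow> 'a \<Rightarrow> real" and a :: "nat \<Rightarrow> real"
    and W :: "'a \<Rightarrow> real"
    and Adj :: "'d \<Rightarrow> 'd \<Rightarrow> bool" and q :: "'d \<Rightarrow> real" and \<Delta> :: real
  defines "\<Lambda> \<equiv> (\<lambda>\<omega>. \<Sum>i<n. a i * X i \<omega>)"
  assumes "prob_space M"
    and "\<And>i. i < n \<Longrightarrow> X i \<in> borel_measurable M"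
    and "prob_space.indep_vars M (\<lambda>_. borel) X {..<n}"
    and "\<And>i. i < n \<Longrightarrow> AE \<omega> in M. X i \<omega> \<ge> 0"
    and "\<And>i. i < n \<Longrightarrow> integrable M (X i)"
    and "\<And>i. i < n \<Longrightarrow> a i \<ge> 0"
    and "AE \<omega> in M. \<Lambda> \<omega> > 0"
    and "symp Adj"
    and "sensitivity Adj q = ereal \<Delta>" and "0 < \<Delta>"
    and "W \<in> borel_measurable M"
    and "\<And>A B. A \<in> sets borel \<Longrightarrow> B \<in> sets borel \<Longrightarrow>
           measure M {\<omega> \<in> space M. \<Lambda> \<omega> \<in> A \<and> W \<omega> \<in> B}
             = (\<integral>\<omega>. indicator A (\<Lambda> \<omega>) * (LINT w:B|lborel. laplace_density (\<Lambda> \<omega>) w) \<partial>M)"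
  shows "differentially_private Adj M (\<lambda>d \<omega>. q d + W \<omega>)
           (ln ((\<Sum>j<n. a j * (\<integral>\<omega>. X j \<omega> \<partial>M)) /
                (\<Sum>j<n. a j * deriv (mgf M (X j)) (- a j * \<Delta>) *
                         (\<Prod>i\<in>{..<n} - {j}. mgf M (X i) (- a i * \<Delta>)))))"
proof -
  interpret prob_space M by fact
  have \<Lambda>_meas: "\<Lambda> \<in> borel_measurable M"
    unfolding \<Lambda>_def using assms(3) by (auto intro!: borel_measurable_sum)
  have numerator: "(\<Sum>j<n. a j * (\<integral>\<omega>. X j \<omega> \<partial>M)) = (\<integral>\<omega>. \<Lambda> \<omega> \<partial>M)"
    unfolding \<Lambda>_def using assms(6) by (simp add: Bochner_Integration.integral_sum)
  have denominator: "(\<Sum>j<n. a j * deriv (mgf M (X j)) (- a j * \<Delta>) * (\<Prod>i\<in>{..<n} - {j}. mgf M (X i) (- a i * \<Delta>)))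
      = (\<integral>\<omega>. \<Lambda> \<omega> * exp (- (\<Lambda> \<omega> * \<Delta>)) \<partial>M)"
    unfolding \<Lambda>_def by (rule sum_mult_deriv_mgf_prod_mgf) (use assms(3-7,11) in simp_all)
  show ?thesis
    unfolding numerator denominator
  proof (rule differentially_private_laplace_mixture)
    show "integrable M \<Lambda>"
      unfolding \<Lambda>_def using assms(6) by auto
    show "measure M {\<omega> \<in> space M. W \<omega> \<in> B} = (\<integral>\<omega>. (LINT w:B|lborel. laplace_density (\<Lambda> \<omega>) w) \<partial>M)"
      if "B \<in> sets borel" for B
      using assms(13)[of UNIV B] that by simp
  qed (use \<Lambda>_meas assms(8,10-12) in simp_all)
qed

end
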